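(* Fix $\zeta\in Z$, a pair of monotone decreasing kinetic functions $(k_c,k_e)$ with associated numbers $\tau_\ell^{sc}$ and $\tau_v^{sc}=k_c(\tau_\ell^{sc})$, and $\tau_R\in(\tau_v^{\min},\tau_v^{sc}]$. Let $\hat\tau\in(\tau_\ell^{\min},\tau_\ell^{sc}]$ be the unique element of $\mathcal A_\ell$ with $p'(\tau_R)=\frac{p(\tau_R)-p(\hat\tau)-\zeta}{\tau_R-\hat\tau}$. Then there exists a continuous monotone increasing function $g_s:[\hat\tau,\tau_\ell^{sc}]\to[\tau_R,\tau_v^{sc}]$ such that for all $\tau\in[\hat\tau,\tau_\ell^{sc}]$ $$p'(g_s(\tau))=\frac{p(g_s(\tau))-p(\tau)-\zeta}{g_s(\tau)-\tau},$$ or equivalently $c(g_s(\tau))=s_c(\tau,g_s(\tau))$.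
   Context: Thermodynamic setting. Fix real numbers $0<\tau_\ell^{\min}<\tau_\ell^{\max}<\tau_v^{\min}$ and $\zeta^{\min}<0<\zeta^{\max}$. Set $\mathcal A_\ell=(\tau_\ell^{\min},\tau_\ell^{\max})$, $\mathcal A_v=(\tau_v^{\min},\infty)$ and $Z=(\zeta^{\min},\zeta^{\max})$. Let $p\in C^2(\mathcal A_\ell\cup\mathcal A_v)$ and $\psi,\mu\in C^3(\mathcal A_\ell\cup\mathcal A_v)$ with $p=-\psi'$ and $\mu=\psi+p\tau$. Assume: (H1) $p'<0$; (H2) $p''>0$ on $\mathcal A_\ell\cup\mathcal A_v$; (H3) for every $\zeta\in Z$ there exist $\tau_\ell^{sat}(\zeta)\in\mathcal A_\ell$, $\tau_v^{sat}(\zeta)\in\mathcal A_v$ with $p(\tau_v^{sat})-p(\tau_\ell^{sat})=\zeta$, $\mu(\tau_v^{sat})=\mu(\tau_\ell^{sat})$; (H4) $p(\tau)\to\infty$ as $\tau\to\tau_\ell^{\min}$; (H5) $p'(\tau_\ell)<p'(\tau_v)$ for all $\tau_\ell\in\mathcal A_\ell,\tau_v\in\mathcal A_v$; (H6) $\int_{\tau_v^{\min}}^R c\,d\tau\to\infty$ as $R\to\infty$, where $c(\tau)=\sqrt{-p'(\tau)}$. For the fixed $\zeta$ write $\tau_\ell^{sat}=\tau_\ell^{sat}(\zeta)$, $\tau_v^{sat}=\tau_v^{sat}(\zeta)$. Speeds: $s_e(\tau_\ell,\tau_v)=-\sqrt{\frac{\zeta-p(\tau_v)+p(\tau_\ell)}{\tau_v-\tau_\ell}}$,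 $s_c(\tau_\ell,\tau_v)=+\sqrt{\frac{\zeta-p(\tau_v)+p(\tau_\ell)}{\tau_v-\tau_\ell}}$. Driving force: $f(\tau_\ell,\tau_v)=\psi(\tau_v)-\psi(\tau_\ell)+(\tau_v-\tau_\ell)\frac{p(\tau_\ell)+p(\tau_v)}2+\zeta\frac{\tau_\ell+\tau_v}2$. Pair of monotone decreasing kinetic functions: given numbers $\tau_\ell^{sc}\in(\tau_\ell^{\min},\tau_\ell^{sat})$, $\tau_v^{se}\in(\tau_v^{\min},\infty)$ and differentiable functions $k_c:[\tau_\ell^{sc},\tau_\ell^{sat}]\to\mathcal A_v$, $k_e:[\tau_v^{sat},\tau_v^{se}]\to\mathcal A_\ell$ such that $k_c'\le0$, $k_e'\le0$; $f(\tau_\ell,k_c(\tau_\ell))\ge0$ on $[\tau_\ell^{sc},\tau_\ell^{sat}]$ and $f(k_e(\tau_v),\tau_v)\le0$ on $[\tau_v^{sat},\tau_v^{se}]$; $k_c(\tau_\ell^{sat})=\tau_v^{sat}$, $k_c(\tau_\ell^{sc})=\tau_v^{sc}$ with $|s_c(\tau_\ell^{sc},\tau_v^{sc})|=c(\tau_v^{sc})$; $k_e(\tau_v^{sat})=\tau_\ell^{sat}$, $k_e(\tau_v^{se})=\tau_\ell^{se}$ with $|s_e(\tau_\ell^{se},\tau_v^{se})|=c(\tau_v^{se})$, and $k_e'(\tau_v^{se})=0$. *)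

theory Defs
  imports "HOL-Analysis.Analysis"
begin

definition Ck_on :: "nat \<Rightarrow> real set \<Rightarrow> (real \<Rightarrow> real) \<Rightarrow> bool" where
  "Ck_on k S f \<longleftrightarrow>
     (\<forall>j<k. \<forall>x\<in>S. ((deriv ^^ j) f) differentiable (at x)) \<and> continuous_on S ((deriv ^^ k) f)"

definition sound_speed :: "(real \<Rightarrow> real) \<Rightarrow> real \<Rightarrow> real" where
  "sound_speed p \<tau> = sqrt (- deriv p \<tau>)"

definition s_e :: "(real \<Rightarrow> real) \<Rightarrow> real \<Rightarrow> real \<Rightarrow> real \<Rightarrow> real" where
  "s_e p \<zeta> \<tau>l \<tau>v = - sqrt ((\<zeta> - p \<tau>v + p \<tau>l) / (\<tau>v - \<tau>l))"

definition s_c :: "(real \<Rightarrow> real) \<Rightarrow> real \<Rightarrow> real \<Rightarrow> real \<Rightarrow> real" where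
  "s_c p \<zeta> \<tau>l \<tau>v = sqrt ((\<zeta> - p \<tau>v + p \<tau>l) / (\<tau>v - \<tau>l))"

definition driving_force :: "(real \<Rightarrow> real) \<Rightarrow> (real \<Rightarrow> real) \<Rightarrow> real \<Rightarrow> real \<Rightarrow> real \<Rightarrow> real" where
  "driving_force \<psi> p \<zeta> \<tau>l \<tau>v =
     \<psi> \<tau>v - \<psi> \<tau>l + (\<tau>v - \<tau>l) * (p \<tau>l + p \<tau>v) / 2 + \<zeta> * (\<tau>l + \<tau>v) / 2"

end

theory Submission
  imports Defs
begin

(*
  Clearing the denominator, the sonic condition p'(v) = (p v - p t - zeta) / (v - t) becomes
  F(t, v) = 0 for F(t, v) = p'(v) (v - t) - p v + p t + zeta. On liquid x vapour states F is
  strictly decreasing in t (dF/dt = p'(t) - p'(v) < 0 by H5) and strictly increasing in v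
  (dF/dv = p''(v) (v - t) > 0 by H2). The kinetic relation makes (tl_sc, tv_sc) a zero of F,
  so F(tl_sc, tauR) <= 0, whereas F(t, tauR) tends to infinity as t tends to tl_min by H4;
  this gives the unique tau_hat. On [tau_hat, tl_sc] x [tauR, tv_sc] the signs of F at the
  corners and the two monotonicities yield, for every t, a unique zero g(t) in v; g is monotone
  because the monotonicities are opposite, and continuous because its graph is the closed zero
  set of F.
*)

lemma monotone_implicit_function:
  fixes F :: "real \<Rightarrow> real \<Rightarrow> real"
  assumes "c \<le> d"
    and cont: "continuous_on ({a..b} \<times> {c..d}) (\<lambda>(t, v). F t v)"
    and mono: "\<And>t v1 v2. t \<in> {a..b} \<Longrightarrow> v1 \<in> {c..d} \<Longrightarrow> v2 \<in> {c..d} \<Longrightarrow> v1 < v2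
                 \<Longrightarrow> F t v1 < F t v2"
    and antimono: "\<And>t1 t2 v. t1 \<in> {a..b} \<Longrightarrow> t2 \<in> {a..b} \<Longrightarrow> v \<in> {c..d} \<Longrightarrow> t1 \<le> t2
                     \<Longrightarrow> F t2 v \<le> F t1 v"
    and "F a c \<le> 0" "0 \<le> F b d"
  shows "\<exists>g. continuous_on {a..b} g \<and> mono_on {a..b} g \<and> g ` {a..b} \<subseteq> {c..d}
             \<and> (\<forall>t\<in>{a..b}. F t (g t) = 0)"
proof -
  let ?S = "{a..b}" and ?T = "{c..d}"
  have root: "\<exists>v\<in>?T. F t v = 0" if t: "t \<in> ?S" for t
  proof -
    have "continuous_on ?T (F t)"
      by (rule continuous_on_compose2[OF cont, of _ "Pair t", simplified])
         (use t in \<open>auto intro!: continuous_intros\<close>)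
    moreover have "F t c \<le> 0" "0 \<le> F t d"
      using antimono[of a t c] antimono[of t b d] t \<open>c \<le> d\<close> assms(5,6) by auto
    ultimately show ?thesis
      using IVT'[of "F t" c 0 d] \<open>c \<le> d\<close> by auto
  qed
  define g where "g t = (SOME v. v \<in> ?T \<and> F t v = 0)" for t
  have g: "g t \<in> ?T" "F t (g t) = 0" if "t \<in> ?S" for t
    using someI_ex[OF root[OF that, unfolded Bex_def]] unfolding g_def by auto
  have g_unique: "v = g t" if "t \<in> ?S" "v \<in> ?T" "F t v = 0" for t v
    using mono[OF that(1) that(2) g(1)[OF that(1)]] mono[OF that(1) g(1)[OF that(1)] that(2)]
      g(2)[OF that(1)] that(3) by (cases "v < g t"; cases "g t < v") auto
  have "mono_on ?S g"
  proof (rule mono_onI, rule ccontr)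
    fix t1 t2 assume t: "t1 \<in> ?S" "t2 \<in> ?S" "t1 \<le> t2" and "\<not> g t1 \<le> g t2"
    then have "F t2 (g t2) < F t2 (g t1)"
      using mono[OF t(2) g(1)[OF t(2)] g(1)[OF t(1)]] by simp
    also have "\<dots> \<le> F t1 (g t1)"
      using antimono[OF t(1,2) g(1)[OF t(1)] t(3)] .
    finally show False using g(2) t by simp
  qed
  moreover have "continuous_on ?S g"
  proof (rule continuous_from_closed_graph[of ?T])
    have "(\<lambda>t. (t, g t)) ` ?S = {z \<in> ?S \<times> ?T. (\<lambda>(t, v). F t v) z = 0}"
      using g g_unique by fastforce
    then show "closed ((\<lambda>t. (t, g t)) ` ?S)"
      using continuous_closed_preimage_constant[OF cont] by (simp add: closed_Times)
  qed (use g in auto)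
  ultimately show ?thesis using g by blast
qed

lemma Ck_on_2_differentiable:
  assumes "Ck_on 2 S f" "x \<in> S"
  shows "f differentiable at x" "deriv f differentiable at x"
  using assms unfolding Ck_on_def by (auto dest: spec[of _ 0] spec[of _ 1])

lemma DERIV_within_nonpos_imp_nonincreasing:
  fixes f :: "real \<Rightarrow> real"
  assumes "a \<le> b" and "\<forall>x\<in>{a..b}. (f has_real_derivative f' x) (at x within {a..b}) \<and> f' x \<le> 0"
  shows "f b \<le> f a"
proof -
  obtain x where x: "x \<in> {a..b}" "f b - f a = f' x * (b - a)"
    using mvt_very_simple[OF \<open>a \<le> b\<close>, of f "\<lambda>x h. f' x * h"] assms(2)
    by (auto simp: has_field_derivative_def)
  have "f' x * (b - a) \<le> 0"
    using assms x(1) by (intro mult_nonpos_nonneg) auto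
  with x(2) show ?thesis by simp
qed

definition sonic_defect :: "(real \<Rightarrow> real) \<Rightarrow> real \<Rightarrow> real \<Rightarrow> real \<Rightarrow> real" where
  "sonic_defect p \<zeta> t v = deriv p v * (v - t) - p v + p t + \<zeta>"

lemma sonic_defect_eq_0_iff:
  "v \<noteq> t \<Longrightarrow> sonic_defect p \<zeta> t v = 0 \<longleftrightarrow> deriv p v = (p v - p t - \<zeta>) / (v - t)"
  unfolding sonic_defect_def by (auto simp: field_simps)

lemma sonic_defect_eq_0_if_sonic:
  assumes "t < v" "deriv p v \<le> 0" "p v - p t \<le> \<zeta>"
    and "\<bar>s_c p \<zeta> t v\<bar> = sound_speed p v"
  shows "sonic_defect p \<zeta> t v = 0"
proof -
  have "(\<zeta> - p v + p t) / (v - t) = - deriv p v"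
    using assms unfolding s_c_def sound_speed_def by simp
  with \<open>t < v\<close> show ?thesis unfolding sonic_defect_def by (simp add: field_simps)
qed

lemma sonic_defect_kinetic_sonic_point:
  fixes kc kc' :: "real \<Rightarrow> real"
  assumes "tl_sc \<le> tl_sat" "tl_sat < tv_sat"
    and kc: "\<forall>x\<in>{tl_sc..tl_sat}. (kc has_real_derivative kc' x) (at x within {tl_sc..tl_sat}) \<and> kc' x \<le> 0"
    and "kc tl_sat = tv_sat" "kc tl_sc = tv_sc"
    and p: "\<forall>x\<in>{tl_sc..tl_sat} \<union> {tv_sat..}. p differentiable at x \<and> deriv p x \<le> 0"
    and "p tv_sat - p tl_sat = \<zeta>"
    and "\<bar>s_c p \<zeta> tl_sc tv_sc\<bar> = sound_speed p tv_sc"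
  shows "sonic_defect p \<zeta> tl_sc tv_sc = 0"
proof -
  have "tv_sat \<le> tv_sc"
    using DERIV_within_nonpos_imp_nonincreasing[OF \<open>tl_sc \<le> tl_sat\<close> kc] assms(4,5) by simp
  have p_nonincreasing: "p y \<le> p x" if "x \<le> y" "{x..y} \<subseteq> {tl_sc..tl_sat} \<union> {tv_sat..}" for x y
  proof (rule DERIV_nonpos_imp_nonincreasing[OF \<open>x \<le> y\<close>])
    fix t assume "x \<le> t" "t \<le> y"
    with that p show "\<exists>d. (p has_real_derivative d) (at t) \<and> d \<le> 0"
      by (metis DERIV_deriv_iff_real_differentiable atLeastAtMost_iff subsetD)
  qed
  have "p tl_sat \<le> p tl_sc" "p tv_sc \<le> p tv_sat"
    using \<open>tl_sc \<le> tl_sat\<close> \<open>tv_sat \<le> tv_sc\<close> by (auto intro!: p_nonincreasing)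
  with assms \<open>tv_sat \<le> tv_sc\<close> show ?thesis
    by (intro sonic_defect_eq_0_if_sonic) auto
qed

lemma sonic_defect_strict_antimono_left:
  assumes "t1 < t2" and "\<forall>x\<in>{t1..t2}. p differentiable at x \<and> deriv p x < deriv p v"
  shows "sonic_defect p \<zeta> t2 v < sonic_defect p \<zeta> t1 v"
proof (rule DERIV_neg_imp_decreasing[OF \<open>t1 < t2\<close>])
  fix x assume "t1 \<le> x" "x \<le> t2"
  with assms have "(p has_real_derivative deriv p x) (at x)" "deriv p x - deriv p v < 0"
    by (auto simp: DERIV_deriv_iff_real_differentiable)
  then show "\<exists>y. ((\<lambda>t. sonic_defect p \<zeta> t v) has_real_derivative y) (at x) \<and> y < 0"
    unfolding sonic_defect_def by (auto intro!: derivative_eq_intros)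
qed

lemma sonic_defect_strict_mono_right:
  assumes "v1 < v2" "t < v1"
    and "\<forall>x\<in>{v1..v2}. p differentiable at x \<and> deriv p differentiable at x \<and> 0 < deriv (deriv p) x"
  shows "sonic_defect p \<zeta> t v1 < sonic_defect p \<zeta> t v2"
proof (rule DERIV_pos_imp_increasing[OF \<open>v1 < v2\<close>])
  fix x assume x: "v1 \<le> x" "x \<le> v2"
  with assms have "(p has_real_derivative deriv p x) (at x)"
    "(deriv p has_real_derivative deriv (deriv p) x) (at x)" "0 < deriv (deriv p) x * (x - t)"
    by (auto simp: DERIV_deriv_iff_real_differentiable)
  then show "\<exists>y. ((sonic_defect p \<zeta> t) has_real_derivative y) (at x) \<and> 0 < y"
    unfolding sonic_defect_def by (auto intro!: derivative_eq_intros simp: algebra_simps)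
qed

lemma continuous_on_sonic_defect:
  assumes "continuous_on S p" "continuous_on T p" "continuous_on T (deriv p)"
  shows "continuous_on (S \<times> T) (\<lambda>(t, v). sonic_defect p \<zeta> t v)"
proof -
  have "continuous_on (S \<times> T) (\<lambda>z. p (fst z))"
    by (auto intro!: continuous_on_compose2[OF assms(1)] continuous_intros)
  moreover have "continuous_on (S \<times> T) (\<lambda>z. p (snd z))" "continuous_on (S \<times> T) (\<lambda>z. deriv p (snd z))"
    by (auto intro!: continuous_on_compose2[OF assms(2)] continuous_on_compose2[OF assms(3)]
        continuous_intros)
  ultimately show ?thesis
    unfolding sonic_defect_def case_prod_unfold by (intro continuous_intros)
qed

lemma sonic_defect_tendsto_at_top:
  assumes "filterlim p at_top (at_right a)"
  shows "filterlim (\<lambda>t. sonic_defect p \<zeta> t v) at_top (at_right a)"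
proof -
  have "((\<lambda>t. deriv p v * (v - t) - p v + \<zeta>) \<longlongrightarrow> deriv p v * (v - a) - p v + \<zeta>) (at_right a)"
    by (intro tendsto_intros)
  from filterlim_tendsto_add_at_top[OF this assms] show ?thesis
    unfolding sonic_defect_def by (simp add: algebra_simps)
qed

lemma sonic_defect_root_left:
  assumes "a < t1" "filterlim p at_top (at_right a)" "continuous_on {a<..t1} p"
    and "sonic_defect p \<zeta> t1 v \<le> 0"
  obtains t where "a < t" "t \<le> t1" "sonic_defect p \<zeta> t v = 0"
proof -
  have "eventually (\<lambda>t. 0 < sonic_defect p \<zeta> t v) (at_right a)"
    using sonic_defect_tendsto_at_top[OF assms(2)] by (simp add: filterlim_at_top_dense)
  then obtain b where "a < b" and b: "\<forall>t>a. t < b \<longrightarrow> 0 < sonic_defect p \<zeta> t v"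
    by (auto simp: eventually_at_right_field)
  define t0 where "t0 = min ((a + b) / 2) ((a + t1) / 2)"
  have t0: "a < t0" "t0 < t1" "t0 < b"
    using \<open>a < b\<close> \<open>a < t1\<close> unfolding t0_def by (auto simp: min_def)
  with b have "0 < sonic_defect p \<zeta> t0 v" by blast
  have "continuous_on {t0..t1} p"
    using t0 by (auto intro: continuous_on_subset[OF assms(3)])
  then have "continuous_on {t0..t1} (\<lambda>t. sonic_defect p \<zeta> t v)"
    unfolding sonic_defect_def by (intro continuous_intros)
  then obtain t where "t0 \<le> t" "t \<le> t1" "sonic_defect p \<zeta> t v = 0"
    using IVT2'[of "\<lambda>t. sonic_defect p \<zeta> t v" t1 0 t0] t0 \<open>0 < sonic_defect p \<zeta> t0 v\<close> assms(4)
    by auto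
  with t0 show ?thesis by (intro that) auto
qed

lemma sonic_curve:
  assumes "a < b" "b \<le> c"
    and diff_l: "\<forall>t\<in>{a<..<b}. p differentiable at t"
    and diff_v: "\<forall>v>c. p differentiable at v \<and> deriv p differentiable at v \<and> 0 < deriv (deriv p) v"
    and sep: "\<forall>t\<in>{a<..<b}. \<forall>v>c. deriv p t < deriv p v"
    and blowup: "filterlim p at_top (at_right a)"
    and sonic: "t1 \<in> {a<..<b}" "c < v1" "sonic_defect p \<zeta> t1 v1 = 0"
    and R: "R \<in> {c<..v1}"
  shows "\<exists>th. th \<in> {a<..t1} \<and> sonic_defect p \<zeta> th R = 0
           \<and> (\<forall>t\<in>{a<..<b}. sonic_defect p \<zeta> t R = 0 \<longrightarrow> t = th)
           \<and> (\<exists>g. continuous_on {th..t1} g \<and> mono_on {th..t1} g \<and> g ` {th..t1} \<subseteq> {R..v1}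
                  \<and> (\<forall>t\<in>{th..t1}. sonic_defect p \<zeta> t (g t) = 0))"
proof -
  let ?F = "sonic_defect p \<zeta>"
  have antimono: "?F t' v < ?F t v" if "t \<in> {a<..<b}" "t' \<in> {a<..<b}" "t < t'" "c < v" for t t' v
    using that diff_l sep by (intro sonic_defect_strict_antimono_left) auto
  have mono: "?F t v < ?F t v'" if "t \<in> {a<..<b}" "c < v" "v < v'" for t v v'
    using that \<open>b \<le> c\<close> diff_v by (intro sonic_defect_strict_mono_right) auto
  have "?F t1 R \<le> 0"
    using mono[OF sonic(1) _, of R v1] R sonic(3) by (cases "R = v1") auto
  moreover have "continuous_on {a<..t1} p"
    using diff_l sonic(1)
    by (intro differentiable_imp_continuous_on differentiable_at_imp_differentiable_on) auto
  ultimately obtain th where th: "a < th" "th \<le> t1" "?F th R = 0"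
    using sonic_defect_root_left[OF _ blowup, of t1 \<zeta> R] sonic(1) by auto
  have th_unique: "t = th" if "t \<in> {a<..<b}" "?F t R = 0" for t
    using antimono[of t th R] antimono[of th t R] that th R sonic(1)
    by (cases t th rule: linorder_cases) auto
  have "continuous_on ({th..t1} \<times> {R..v1}) (\<lambda>(t, v). ?F t v)"
    using th sonic(1) R diff_l diff_v
    by (intro continuous_on_sonic_defect differentiable_imp_continuous_on
        differentiable_at_imp_differentiable_on) auto
  moreover have "?F t' v \<le> ?F t v"
    if "t \<in> {th..t1}" "t' \<in> {th..t1}" "v \<in> {R..v1}" "t \<le> t'" for t t' v
    using antimono[of t t' v] that th sonic(1) R by (cases "t = t'") auto
  moreover have "?F t v < ?F t v'" if "t \<in> {th..t1}" "v \<in> {R..v1}" "v < v'" for t v v'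
    using mono that th sonic(1) R by auto
  ultimately have "\<exists>g. continuous_on {th..t1} g \<and> mono_on {th..t1} g \<and> g ` {th..t1} \<subseteq> {R..v1}
                  \<and> (\<forall>t\<in>{th..t1}. ?F t (g t) = 0)"
    using R th sonic(3) by (intro monotone_implicit_function) auto
  with th th_unique show ?thesis by auto
qed

theorem lemma3p6:
  fixes tl_min tl_max tv_min z_min z_max :: real
    and p \<psi> \<mu> :: "real \<Rightarrow> real"
    and \<zeta> tl_sat tv_sat :: real
    and tl_sc tv_sc tv_se tl_se :: real
    and kc ke kc' ke' :: "real \<Rightarrow> real"
    and \<tau>R :: real
  defines "Al \<equiv> {tl_min<..<tl_max}"
      and "Av \<equiv> {tv_min<..}"
      and "Z \<equiv> {z_min<..<z_max}"
  assumes ord: "0 < tl_min" "tl_min < tl_max" "tl_max < tv_min"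
      and zord: "z_min < 0" "0 < z_max"
      and reg_p: "Ck_on 2 (Al \<union> Av) p"
      and reg_psi: "Ck_on 3 (Al \<union> Av) \<psi>"
      and reg_mu: "Ck_on 3 (Al \<union> Av) \<mu>"
      and p_def: "\<forall>x\<in>Al \<union> Av. p x = - deriv \<psi> x"
      and mu_def: "\<forall>x\<in>Al \<union> Av. \<mu> x = \<psi> x + p x * x"
      and H1: "\<forall>x\<in>Al \<union> Av. deriv p x < 0"
      and H2: "\<forall>x\<in>Al \<union> Av. deriv (deriv p) x > 0"
      and H3: "\<forall>z\<in>Z. \<exists>a\<in>Al. \<exists>b\<in>Av. p b - p a = z \<and> \<mu> b = \<mu> a"
      and H4: "filterlim p at_top (at_right tl_min)"
      and H5: "\<forall>a\<in>Al. \<forall>b\<in>Av. deriv p a < deriv p b"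
      and H6: "((\<lambda>R. set_nn_integral lborel {tv_min<..R} (\<lambda>x. ennreal (sound_speed p x)))
                 \<longlongrightarrow> \<infinity>) at_top"
      and zeta: "\<zeta> \<in> Z"
      and sat: "tl_sat \<in> Al" "tv_sat \<in> Av" "p tv_sat - p tl_sat = \<zeta>" "\<mu> tv_sat = \<mu> tl_sat"
      \<comment> \<open>pair of monotone decreasing kinetic functions\<close>
      and sc_range: "tl_sc \<in> {tl_min<..<tl_sat}"
      and se_range: "tv_se \<in> {tv_min<..}" "tv_sat < tv_se"
      and kc_deriv: "\<forall>x\<in>{tl_sc..tl_sat}. (kc has_real_derivative kc' x) (at x within {tl_sc..tl_sat})"
      and ke_deriv: "\<forall>x\<in>{tv_sat..tv_se}. (ke has_real_derivative ke' x) (at x within {tv_sat..tv_se})"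
      and kc_range: "kc ` {tl_sc..tl_sat} \<subseteq> Av"
      and ke_range: "ke ` {tv_sat..tv_se} \<subseteq> Al"
      and kc_dec: "\<forall>x\<in>{tl_sc..tl_sat}. kc' x \<le> 0"
      and ke_dec: "\<forall>x\<in>{tv_sat..tv_se}. ke' x \<le> 0"
      and kc_f: "\<forall>x\<in>{tl_sc..tl_sat}. driving_force \<psi> p \<zeta> x (kc x) \<ge> 0"
      and ke_f: "\<forall>x\<in>{tv_sat..tv_se}. driving_force \<psi> p \<zeta> (ke x) x \<le> 0"
      and kc_sat: "kc tl_sat = tv_sat"
      and kc_sc: "kc tl_sc = tv_sc" "\<bar>s_c p \<zeta> tl_sc tv_sc\<bar> = sound_speed p tv_sc"
      and ke_sat: "ke tv_sat = tl_sat"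
      and ke_se: "ke tv_se = tl_se" "\<bar>s_e p \<zeta> tl_se tv_se\<bar> = sound_speed p tv_se"
      and ke'_se: "ke' tv_se = 0"
      \<comment> \<open>the right state\<close>
      and tauR: "\<tau>R \<in> {tv_min<..tv_sc}"
  shows "\<exists>\<tau>h. \<tau>h \<in> {tl_min<..tl_sc}
            \<and> deriv p \<tau>R = (p \<tau>R - p \<tau>h - \<zeta>) / (\<tau>R - \<tau>h)
            \<and> (\<forall>t\<in>Al. deriv p \<tau>R = (p \<tau>R - p t - \<zeta>) / (\<tau>R - t) \<longrightarrow> t = \<tau>h)
            \<and> (\<exists>g. continuous_on {\<tau>h..tl_sc} g \<and> mono_on {\<tau>h..tl_sc} g
                   \<and> g ` {\<tau>h..tl_sc} \<subseteq> {\<tau>R..tv_sc}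
                   \<and> (\<forall>t\<in>{\<tau>h..tl_sc}. deriv p (g t) = (p (g t) - p t - \<zeta>) / (g t - t)))"
proof -
  have diff: "p differentiable at x" "deriv p differentiable at x" if "x \<in> Al \<union> Av" for x
    using Ck_on_2_differentiable[OF reg_p that] by auto
  have tl_sc: "tl_sc \<in> {tl_min<..<tl_max}" "tl_sc \<le> tl_sat"
    using sc_range sat(1) unfolding Al_def by auto
  have "\<forall>x\<in>{tl_sc..tl_sat} \<union> {tv_sat..}. p differentiable at x \<and> deriv p x \<le> 0"
    using diff H1 tl_sc sat(1,2) unfolding Al_def Av_def by (fastforce intro: less_imp_le)
  moreover have "\<forall>x\<in>{tl_sc..tl_sat}. (kc has_real_derivative kc' x) (at x within {tl_sc..tl_sat})
                   \<and> kc' x \<le> 0"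
    using kc_deriv kc_dec by blast
  moreover have "tl_sat < tv_sat"
    using sat(1,2) ord unfolding Al_def Av_def by auto
  ultimately have sonic: "sonic_defect p \<zeta> tl_sc tv_sc = 0"
    using sonic_defect_kinetic_sonic_point[OF tl_sc(2) _ _ kc_sat kc_sc(1) _ sat(3) kc_sc(2)] by auto
  have "\<forall>t\<in>{tl_min<..<tl_max}. p differentiable at t"
    "\<forall>v>tv_min. p differentiable at v \<and> deriv p differentiable at v \<and> 0 < deriv (deriv p) v"
    "\<forall>t\<in>{tl_min<..<tl_max}. \<forall>v>tv_min. deriv p t < deriv p v"
    using diff H2 H5 unfolding Al_def Av_def by auto
  then obtain \<tau>h g where
    "\<tau>h \<in> {tl_min<..tl_sc}" "sonic_defect p \<zeta> \<tau>h \<tau>R = 0"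
    "\<forall>t\<in>Al. sonic_defect p \<zeta> t \<tau>R = 0 \<longrightarrow> t = \<tau>h"
    "continuous_on {\<tau>h..tl_sc} g" "mono_on {\<tau>h..tl_sc} g" "g ` {\<tau>h..tl_sc} \<subseteq> {\<tau>R..tv_sc}"
    "\<forall>t\<in>{\<tau>h..tl_sc}. sonic_defect p \<zeta> t (g t) = 0"
    using sonic_curve[OF ord(2) less_imp_le[OF ord(3)] _ _ _ H4 tl_sc(1) _ sonic tauR] tauR
    unfolding Al_def by fastforce
  moreover have "deriv p v = (p v - p t - \<zeta>) / (v - t) \<longleftrightarrow> sonic_defect p \<zeta> t v = 0"
    if "t < tl_max" "\<tau>R \<le> v" for t v
    using sonic_defect_eq_0_iff[of v t p \<zeta>] that ord tauR by auto
  moreover have "\<tau>h < tl_max" "\<forall>t\<in>Al. t < tl_max" "\<forall>t\<in>{\<tau>h..tl_sc}. t < tl_max"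
    using \<open>\<tau>h \<in> {tl_min<..tl_sc}\<close> tl_sc unfolding Al_def by auto
  ultimately show ?thesis
    using tauR by (intro exI[of _ \<tau>h]) (auto simp: image_subset_iff)
qed

end
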